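(* Let $H$ be a dephased $d\times d$ complex Hadamard matrix such that one of the following holds: (1) the diagonal entries of $H$ are real and all other entries are non-real; (2) every entry of $H$ is of the form $\omega^k$ with $k\in\{0,\dots,d/2-1\}$, where $\omega=e^{2\pi i/d}$; (3) every entry of $H$ is a power of $\omega=e^{2\pi i/N}$ for some odd $N$. Then $H$ has no ER pair of columns and no ER pair of rows (so the construction producing families from ER pairs cannot be applied to $H$).
   Context: A $d\times d$ complex Hadamard matrix has unimodular entries and pairwise orthogonal columns; it is dephased if its first row and first column consist of $1$'s. Two distinct columns $C_A,C_B$ form an ER pair if $\overline{(C_A)_j}(C_B)_j\in\{1,-1\}$ for every $j$; ER pairs of rows are defined analogously. *)

theory Defs
  imports Complex_Main
begin

text \<open>A d x d complex matrix is represented as H :: nat => nat => complex,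
  H i j being the entry in row i, column j, with indices 0..d-1.\<close>

definition complex_hadamard :: "nat \<Rightarrow> (nat \<Rightarrow> nat \<Rightarrow> complex) \<Rightarrow> bool" where
  "complex_hadamard d H \<longleftrightarrow>
     (\<forall>i<d. \<forall>j<d. cmod (H i j) = 1) \<and>
     (\<forall>a<d. \<forall>b<d. a \<noteq> b \<longrightarrow> (\<Sum>j<d. cnj (H j a) * H j b) = 0)"

definition dephased :: "nat \<Rightarrow> (nat \<Rightarrow> nat \<Rightarrow> complex) \<Rightarrow> bool" where
  "dephased d H \<longleftrightarrow> (\<forall>j<d. H 0 j = 1 \<and> H j 0 = 1)"

definition ER_column_pair :: "nat \<Rightarrow> (nat \<Rightarrow> nat \<Rightarrow> complex) \<Rightarrow> nat \<Rightarrow> nat \<Rightarrow> bool" where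
  "ER_column_pair d H a b \<longleftrightarrow> a < d \<and> b < d \<and> a \<noteq> b \<and>
     (\<forall>j<d. cnj (H j a) * H j b \<in> {1, -1})"

definition ER_row_pair :: "nat \<Rightarrow> (nat \<Rightarrow> nat \<Rightarrow> complex) \<Rightarrow> nat \<Rightarrow> nat \<Rightarrow> bool" where
  "ER_row_pair d H a b \<longleftrightarrow> a < d \<and> b < d \<and> a \<noteq> b \<and>
     (\<forall>j<d. cnj (H a j) * H b j \<in> {1, -1})"

end

theory Submission imports Defs "Jordan_Normal_Form.Determinant" begin

text \<open>An ER pair of columns forces each entry of one column to be \<open>\<pm>\<close> the corresponding entry
  of the other. Under (1) this makes an off-diagonal entry a real multiple of a diagonal one.
  Under (2) and (3) no entry of \<open>H\<close> is the negative of another, so the two columns would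
  coincide, contradicting their orthogonality. Rows are handled by passing to the transpose,
  which is again Hadamard because a matrix with orthonormal columns has orthonormal rows.\<close>

lemma unimodular_cnj_mult_self:
  "cmod x = 1 \<Longrightarrow> cnj x * x = 1"
  by (metis complex_norm_square mult.commute of_real_1 power_one)

lemma unimodular_cnj_mult_pm1:
  assumes "cmod x = 1" and "cnj x * y \<in> {1, -1}"
  shows "y = x \<or> y = - x"
proof -
  have "y = x * (cnj x * y)"
    using unimodular_cnj_mult_self[OF assms(1)] by (simp add: mult.assoc[symmetric] mult.commute)
  thus ?thesis using assms(2) by (metis insertE mult.right_neutral mult_minus1_right singletonD)
qed

lemma complex_hadamard_rows_orthogonal:
  assumes h: "complex_hadamard d H" and ab: "a < d" "b < d" "a \<noteq> b"
  shows "(\<Sum>k<d. H a k * cnj (H b k)) = 0"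
proof -
  have d0: "d > 0" using ab by auto
  define A where "A = mat d d (\<lambda>(i,j). cnj (H j i) / of_nat d)"
  define B where "B = mat d d (\<lambda>(i,j). H i j)"
  have AB: "A * B = 1\<^sub>m d"
  proof (rule eq_matI)
    fix i j assume "i < dim_row (1\<^sub>m d)" "j < dim_col (1\<^sub>m d)"
    hence i: "i < d" and j: "j < d" by auto
    have "(A * B) $$ (i, j) = (\<Sum>k<d. cnj (H k i) * H k j) / of_nat d"
      using i j by (simp add: A_def B_def scalar_prod_def sum_divide_distrib atLeast0LessThan)
    also have "\<dots> = (if i = j then 1 else 0)"
    proof (cases "i = j")
      case True
      have "cmod (H k i) = 1" if "k < d" for k
        using h i that unfolding complex_hadamard_def by auto
      hence "(\<Sum>k<d. cnj (H k i) * H k j) = (\<Sum>k<d. 1)"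
        using True by (simp add: unimodular_cnj_mult_self)
      thus ?thesis using True d0 by simp
    next
      case False
      thus ?thesis using h i j unfolding complex_hadamard_def by auto
    qed
    finally show "(A * B) $$ (i, j) = 1\<^sub>m d $$ (i, j)" using i j by simp
  qed (auto simp: A_def B_def)
  have "B * A = 1\<^sub>m d"
    by (rule mat_mult_left_right_inverse[OF _ _ AB]) (auto simp: A_def B_def)
  hence "(B * A) $$ (a, b) = 0" using ab by simp
  moreover have "(B * A) $$ (a, b) = (\<Sum>k<d. H a k * cnj (H b k)) / of_nat d"
    using ab by (simp add: A_def B_def scalar_prod_def sum_divide_distrib atLeast0LessThan)
  ultimately show ?thesis using d0 by simp
qed

lemma complex_hadamard_transpose:
  assumes "complex_hadamard d H"
  shows "complex_hadamard d (\<lambda>i j. H j i)"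
proof -
  have "(\<Sum>j<d. cnj (H a j) * H b j) = 0" if "a < d" "b < d" "a \<noteq> b" for a b
  proof -
    have "(\<Sum>j<d. cnj (H a j) * H b j) = cnj (\<Sum>j<d. H a j * cnj (H b j))"
      by (simp add: mult.commute)
    thus ?thesis using complex_hadamard_rows_orthogonal[OF assms that] by simp
  qed
  thus ?thesis using assms unfolding complex_hadamard_def by auto
qed

lemma ER_row_pair_iff_transpose:
  "ER_row_pair d H a b \<longleftrightarrow> ER_column_pair d (\<lambda>i j. H j i) a b"
  by (simp add: ER_row_pair_def ER_column_pair_def)

lemma ER_column_pair_entries:
  assumes "complex_hadamard d H" and "ER_column_pair d H a b" and "j < d"
  shows "H j b = H j a \<or> H j b = - H j a"
proof (rule unimodular_cnj_mult_pm1)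
  show "cmod (H j a) = 1" "cnj (H j a) * H j b \<in> {1, -1}"
    using assms unfolding complex_hadamard_def ER_column_pair_def by auto
qed

lemma no_ER_column_pair_real_diagonal:
  assumes "complex_hadamard d H"
    and "\<forall>i<d. H i i \<in> \<real>" and "\<forall>i<d. \<forall>j<d. i \<noteq> j \<longrightarrow> H i j \<notin> \<real>"
  shows "\<not> ER_column_pair d H a b"
proof
  assume er: "ER_column_pair d H a b"
  hence ab: "a < d" "b < d" "a \<noteq> b" by (auto simp: ER_column_pair_def)
  have "H a b = H a a \<or> H a b = - H a a" using ER_column_pair_entries[OF assms(1) er ab(1)] .
  moreover have "H a a \<in> \<real>" "H a b \<notin> \<real>" using assms(2,3) ab by auto
  ultimately show False by auto
qed

lemma no_ER_column_pair_no_antipodal_entries: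
  assumes h: "complex_hadamard d H"
    and no_antipodal: "\<forall>i<d. \<forall>j<d. \<forall>i'<d. \<forall>j'<d. H i j \<noteq> - H i' j'"
  shows "\<not> ER_column_pair d H a b"
proof
  assume er: "ER_column_pair d H a b"
  hence ab: "a < d" "b < d" "a \<noteq> b" by (auto simp: ER_column_pair_def)
  have "H j b = H j a" if "j < d" for j
    using ER_column_pair_entries[OF h er that] no_antipodal that ab by metis
  moreover have "cmod (H j a) = 1" if "j < d" for j
    using h ab that unfolding complex_hadamard_def by auto
  ultimately have "(\<Sum>j<d. cnj (H j a) * H j b) = (\<Sum>j<d. 1)"
    by (simp add: unimodular_cnj_mult_self)
  moreover have "(\<Sum>j<d. cnj (H j a) * H j b) = 0"
    using h ab unfolding complex_hadamard_def by auto
  ultimately show False using ab by simp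
qed

lemma cis_power_neq_minus_one:
  assumes "2 * j < n"
  shows "cis (2 * pi / real n) ^ j \<noteq> -1"
proof
  define t where "t = real j * (2 * pi / real n)"
  assume "cis (2 * pi / real n) ^ j = -1"
  hence "cos t = -1" "sin t = 0" by (simp_all add: DeMoivre t_def complex_eq_iff)
  moreover have "0 \<le> t" by (simp add: t_def)
  moreover have "t < pi"
  proof -
    have "t * real n = pi * real (2 * j)" using assms by (simp add: t_def field_simps)
    also have "\<dots> < pi * real n" using assms by simp
    finally show ?thesis using assms by (simp add: mult_less_cancel_right)
  qed
  ultimately show False
    using sin_gt_zero[of t] by (cases "t = 0") auto
qed

lemma cis_powers_below_half_not_antipodal:
  assumes "k < n div 2" and "m < n div 2"
  shows "cis (2 * pi / real n) ^ m \<noteq> - (cis (2 * pi / real n) ^ k)"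
proof
  define w where "w = cis (2 * pi / real n)"
  assume "cis (2 * pi / real n) ^ m = - (cis (2 * pi / real n) ^ k)"
  hence antipodal: "w ^ m = - (w ^ k)" by (simp add: w_def)
  have w_nz: "w ^ i \<noteq> 0" for i by (simp add: w_def)
  have "w ^ (max k m - min k m) = -1"
  proof (cases "k \<le> m")
    case True
    have "w ^ k * w ^ (m - k) = w ^ m" using True by (simp flip: power_add)
    also have "\<dots> = w ^ k * (-1)" using antipodal by simp
    finally have "w ^ (m - k) = -1" using w_nz[of k] by (metis mult_left_cancel)
    thus ?thesis using True by (simp add: max_def min_def)
  next
    case False
    have "w ^ m * w ^ (k - m) = w ^ k" using False by (simp flip: power_add)
    also have "\<dots> = w ^ m * (-1)" using antipodal by simp
    finally have "w ^ (k - m) = -1" using w_nz[of m] by (metis mult_left_cancel)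
    thus ?thesis using False by (simp add: max_def min_def)
  qed
  moreover have "2 * (max k m - min k m) < n" using assms by linarith
  ultimately show False using cis_power_neq_minus_one unfolding w_def by blast
qed

lemma odd_roots_of_unity_not_antipodal:
  fixes y z :: complex
  assumes "odd N" and "y ^ N = 1" and "z ^ N = 1"
  shows "y \<noteq> - z"
  using assms by auto

theorem proposition4:
  fixes d :: nat and H :: "nat \<Rightarrow> nat \<Rightarrow> complex"
  assumes "complex_hadamard d H"
    and "dephased d H"
    and "((\<forall>i<d. H i i \<in> \<real>) \<and> (\<forall>i<d. \<forall>j<d. i \<noteq> j \<longrightarrow> H i j \<notin> \<real>))
         \<or> (\<forall>i<d. \<forall>j<d. \<exists>k<d div 2. H i j = cis (2 * pi / real d) ^ k)
         \<or> (\<exists>N::nat. odd N \<and> (\<forall>i<d. \<forall>j<d. \<exists>k::nat. H i j = cis (2 * pi / real N) ^ k))"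
  shows "\<not> (\<exists>a b. ER_column_pair d H a b) \<and> \<not> (\<exists>a b. ER_row_pair d H a b)"
proof -
  let ?T = "\<lambda>i j. H j i"
  have hadamard: "complex_hadamard d H" "complex_hadamard d ?T"
    using assms(1) complex_hadamard_transpose by auto
  have "\<not> ER_column_pair d H a b \<and> \<not> ER_column_pair d ?T a b" for a b
    using assms(3)
  proof (elim disjE conjE exE)
    assume "\<forall>i<d. H i i \<in> \<real>" "\<forall>i<d. \<forall>j<d. i \<noteq> j \<longrightarrow> H i j \<notin> \<real>"
    thus ?thesis
      using no_ER_column_pair_real_diagonal[OF hadamard(1)]
        no_ER_column_pair_real_diagonal[OF hadamard(2)] by auto
  next
    assume "\<forall>i<d. \<forall>j<d. \<exists>k<d div 2. H i j = cis (2 * pi / real d) ^ k"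
    hence "\<forall>i<d. \<forall>j<d. \<forall>i'<d. \<forall>j'<d. H i j \<noteq> - H i' j'"
      using cis_powers_below_half_not_antipodal by metis
    thus ?thesis
      using no_ER_column_pair_no_antipodal_entries[OF hadamard(1)]
        no_ER_column_pair_no_antipodal_entries[OF hadamard(2)] by blast
  next
    fix N :: nat
    assume "odd N" "\<forall>i<d. \<forall>j<d. \<exists>k::nat. H i j = cis (2 * pi / real N) ^ k"
    moreover have "(cis (2 * pi / real N) ^ k) ^ N = 1" for k
    proof -
      have "cis (2 * pi / real N) ^ N = 1" using \<open>odd N\<close> by (simp add: DeMoivre odd_pos)
      thus ?thesis by (metis power_mult mult.commute power_one)
    qed
    ultimately have "\<forall>i<d. \<forall>j<d. \<forall>i'<d. \<forall>j'<d. H i j \<noteq> - H i' j'"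
      using odd_roots_of_unity_not_antipodal by metis
    thus ?thesis
      using no_ER_column_pair_no_antipodal_entries[OF hadamard(1)]
        no_ER_column_pair_no_antipodal_entries[OF hadamard(2)] by blast
  qed
  thus ?thesis by (simp add: ER_row_pair_iff_transpose)
qed

end
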